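(* Let $\mathcal{U}\subseteq\mathcal{M}$ be retraction-convex and let $b_0,b_1,b_2,b_3\in\mathcal{U}$. Then the generalized de Casteljau curve $t\mapsto\beta(t;b_0,b_1,b_2,b_3)$ is well-defined for every $t\in[0,1]$.
   Context: $\mathcal{M}$ is a connected Riemannian manifold with norms $\|\cdot\|_x$. $R$ is a retraction: a smooth map from an open subset $\mathcal{O}\subseteq T\mathcal{M}$ containing all zero vectors into $\mathcal{M}$, $R_x(v)=R(x,v)$, with $R_x(0)=x$ and $\mathrm{D}R_x(0)=\mathrm{id}_{T_x\mathcal{M}}$. Fix a continuous $\Delta:\mathcal{M}\to(0,\infty]$ such that $\mathcal{T}=\{(x,v):\|v\|_x<\Delta(x)\}\subseteq\mathcal{O}$ and $E(x,v)=(x,R_x(v))$ is a diffeomorphism from $\mathcal{T}$ onto its image in $\mathcal{M}\times\mathcal{M}$. $R_x(v)$ is well-defined if $(x,v)\in\mathcal{O}$; $R_x^{-1}(y)$ is well-defined when $(x,y)\in E(\mathcal{T})$, equal to the unique $v$ with $E(x,v)=(x,y)$. A set $\mathcal{U}$ is retraction-convex if for all $x,y,z\in\mathcal{U}$: $R_x^{-1}(y)$ is well-defined, and for every $\tau\in[0,1]$, $R_x((1-\tau)R_x^{-1}(y)+\tau R_x^{-1}(z))$ is well-defined and lies in $\mathcal{U}$. Let $c_r(t;x,y)=R_{q(r)}\big((1-t)R_{q(r)}^{-1}(x)+tR_{q(r)}^{-1}(y)\big)$, $q(r)=R_x(rR_x^{-1}(y))$. The generalized de Casteljau curve is $\beta(t;b_0,b_1,b_2,b_3)=\beta_{012}(t,t,t)$,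 where $\beta_0(t)=c_0(t;b_0,b_1)$, $\beta_1(t)=c_{1/2}(t;b_1,b_2)$, $\beta_2(t)=c_1(t;b_2,b_3)$, $\beta_{01}(s,t)=c_0(s;\beta_0(t),\beta_1(t))$, $\beta_{12}(s,t)=c_1(s;\beta_1(t),\beta_2(t))$, $\beta_{012}(u,s,t)=c_t(u;\beta_{01}(s,t),\beta_{12}(s,t))$; it is well-defined when every retraction and inverse retraction in these formulas is well-defined. *)

theory Defs
  imports "HOL-Analysis.Analysis" "HOL-Library.Extended_Real"
begin

text \<open>C-infinity on an open set S: differentiable, and every directional derivative
  x |-> Df(x) v is again C-infinity (coinductively).\<close>
coinductive smooth_on :: "'a::real_normed_vector set \<Rightarrow> ('a \<Rightarrow> 'b::real_normed_vector) \<Rightarrow> bool"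
  for S where
  "f differentiable_on S \<Longrightarrow> (\<forall>v. smooth_on S (\<lambda>x. frechet_derivative f (at x) v))
     \<Longrightarrow> smooth_on S f"

definition smooth_map_on :: "'a::real_normed_vector set \<Rightarrow> ('a \<Rightarrow> 'b::real_normed_vector) \<Rightarrow> bool" where
  "smooth_map_on A f \<longleftrightarrow>
     (\<forall>p\<in>A. \<exists>N F. open N \<and> p \<in> N \<and> smooth_on N F \<and> (\<forall>q\<in>N \<inter> A. F q = f q))"

definition embedded_submanifold :: "'e::euclidean_space set \<Rightarrow> bool" where
  "embedded_submanifold M \<longleftrightarrow>
     (\<forall>p\<in>M. \<exists>U V (\<phi>::'e\<Rightarrow>'e) \<psi> L. open U \<and> p \<in> U \<and> open V \<and> subspace L \<and>
        \<phi> ` U = V \<and> (\<forall>x\<in>U. \<psi> (\<phi> x) = x) \<and> (\<forall>y\<in>V. \<phi> (\<psi> y) = y) \<and>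
        smooth_on U \<phi> \<and> smooth_on V \<psi> \<and> \<phi> ` (U \<inter> M) = V \<inter> L)"

definition tangent_space :: "'e::euclidean_space set \<Rightarrow> 'e \<Rightarrow> 'e set" where
  "tangent_space M x = {v. \<exists>\<gamma>::real \<Rightarrow> 'e. smooth_on {-1<..<1} \<gamma> \<and> \<gamma> ` {-1<..<1} \<subseteq> M \<and>
        \<gamma> 0 = x \<and> (\<gamma> has_vector_derivative v) (at 0)}"

definition tangent_bundle :: "'e::euclidean_space set \<Rightarrow> ('e \<times> 'e) set" where
  "tangent_bundle M = {(x, v). x \<in> M \<and> v \<in> tangent_space M x}"

definition riemannian_metric :: "'e::euclidean_space set \<Rightarrow> ('e \<Rightarrow> 'e \<Rightarrow> 'e \<Rightarrow> real) \<Rightarrow> bool" where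
  "riemannian_metric M g \<longleftrightarrow>
     (\<forall>x\<in>M. bilinear (g x) \<and> (\<forall>u v. g x u v = g x v u) \<and>
        (\<forall>v\<in>tangent_space M x. v \<noteq> 0 \<longrightarrow> g x v v > 0)) \<and>
     (\<exists>W. open W \<and> M \<subseteq> W \<and> smooth_on (W \<times> UNIV \<times> UNIV) (\<lambda>(x, u, v). g x u v))"

definition rnorm :: "('e \<Rightarrow> 'e \<Rightarrow> 'e \<Rightarrow> real) \<Rightarrow> 'e \<Rightarrow> 'e \<Rightarrow> real" where
  "rnorm g x v = sqrt (g x v v)"

definition is_retraction ::
  "'e::euclidean_space set \<Rightarrow> ('e \<times> 'e) set \<Rightarrow> ('e \<Rightarrow> 'e \<Rightarrow> 'e) \<Rightarrow> bool" where
  "is_retraction M Odom R \<longleftrightarrow>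
     openin (top_of_set (tangent_bundle M)) Odom \<and>
     (\<forall>x\<in>M. (x, 0) \<in> Odom) \<and>
     (\<forall>(x, v)\<in>Odom. R x v \<in> M) \<and>
     smooth_map_on Odom (\<lambda>(x, v). R x v) \<and>
     (\<forall>x\<in>M. R x 0 = x) \<and>
     (\<forall>x\<in>M. (R x has_derivative (\<lambda>v. v)) (at 0 within {v. (x, v) \<in> Odom}))"

definition Tset :: "('e \<Rightarrow> 'e \<Rightarrow> 'e \<Rightarrow> real) \<Rightarrow> 'e::euclidean_space set \<Rightarrow> ('e \<Rightarrow> ereal) \<Rightarrow> ('e \<times> 'e) set" where
  "Tset g M \<Delta> = {(x, v). (x, v) \<in> tangent_bundle M \<and> ereal (rnorm g x v) < \<Delta> x}"

definition Emap :: "('e \<Rightarrow> 'e \<Rightarrow> 'e) \<Rightarrow> 'e \<times> 'e \<Rightarrow> 'e \<times> 'e" where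
  "Emap R = (\<lambda>(x, v). (x, R x v))"

definition retraction_setting ::
  "'e::euclidean_space set \<Rightarrow> ('e \<Rightarrow> 'e \<Rightarrow> 'e \<Rightarrow> real) \<Rightarrow> ('e \<times> 'e) set \<Rightarrow> ('e \<Rightarrow> 'e \<Rightarrow> 'e)
     \<Rightarrow> ('e \<Rightarrow> ereal) \<Rightarrow> bool" where
  "retraction_setting M g Odom R \<Delta> \<longleftrightarrow>
     embedded_submanifold M \<and> connected M \<and> riemannian_metric M g \<and>
     is_retraction M Odom R \<and>
     continuous_on M \<Delta> \<and> (\<forall>x\<in>M. \<Delta> x > 0) \<and>
     Tset g M \<Delta> \<subseteq> Odom \<and>
     inj_on (Emap R) (Tset g M \<Delta>) \<and>
     smooth_map_on (Tset g M \<Delta>) (Emap R) \<and>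
     smooth_map_on (Emap R ` Tset g M \<Delta>) (inv_into (Tset g M \<Delta>) (Emap R))"

definition R_defined :: "('e \<times> 'e) set \<Rightarrow> 'e \<Rightarrow> 'e \<Rightarrow> bool" where
  "R_defined Odom x v \<longleftrightarrow> (x, v) \<in> Odom"

definition Rinv_defined ::
  "('e \<Rightarrow> 'e \<Rightarrow> 'e \<Rightarrow> real) \<Rightarrow> 'e::euclidean_space set \<Rightarrow> ('e \<Rightarrow> ereal) \<Rightarrow> ('e \<Rightarrow> 'e \<Rightarrow> 'e)
     \<Rightarrow> 'e \<Rightarrow> 'e \<Rightarrow> bool" where
  "Rinv_defined g M \<Delta> R x y \<longleftrightarrow> (x, y) \<in> Emap R ` Tset g M \<Delta>"

definition Rinv ::
  "('e \<Rightarrow> 'e \<Rightarrow> 'e \<Rightarrow> real) \<Rightarrow> 'e::euclidean_space set \<Rightarrow> ('e \<Rightarrow> ereal) \<Rightarrow> ('e \<Rightarrow> 'e \<Rightarrow> 'e)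
     \<Rightarrow> 'e \<Rightarrow> 'e \<Rightarrow> 'e" where
  "Rinv g M \<Delta> R x y = (THE v. (x, v) \<in> Tset g M \<Delta> \<and> Emap R (x, v) = (x, y))"

definition retraction_convex ::
  "'e::euclidean_space set \<Rightarrow> ('e \<Rightarrow> 'e \<Rightarrow> 'e \<Rightarrow> real) \<Rightarrow> ('e \<times> 'e) set \<Rightarrow> ('e \<Rightarrow> 'e \<Rightarrow> 'e)
     \<Rightarrow> ('e \<Rightarrow> ereal) \<Rightarrow> 'e set \<Rightarrow> bool" where
  "retraction_convex M g Odom R \<Delta> U \<longleftrightarrow>
     (\<forall>x\<in>U. \<forall>y\<in>U. \<forall>z\<in>U.
        Rinv_defined g M \<Delta> R x y \<and>
        (\<forall>\<tau>\<in>{0..1}.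
           R_defined Odom x ((1 - \<tau>) *\<^sub>R Rinv g M \<Delta> R x y + \<tau> *\<^sub>R Rinv g M \<Delta> R x z) \<and>
           R x ((1 - \<tau>) *\<^sub>R Rinv g M \<Delta> R x y + \<tau> *\<^sub>R Rinv g M \<Delta> R x z) \<in> U))"

definition qpt :: "('e \<Rightarrow> 'e \<Rightarrow> 'e \<Rightarrow> real) \<Rightarrow> 'e::euclidean_space set \<Rightarrow> ('e \<Rightarrow> ereal)
     \<Rightarrow> ('e \<Rightarrow> 'e \<Rightarrow> 'e) \<Rightarrow> real \<Rightarrow> 'e \<Rightarrow> 'e \<Rightarrow> 'e" where
  "qpt g M \<Delta> R r x y = R x (r *\<^sub>R Rinv g M \<Delta> R x y)"

definition ccurve :: "('e \<Rightarrow> 'e \<Rightarrow> 'e \<Rightarrow> real) \<Rightarrow> 'e::euclidean_space set \<Rightarrow> ('e \<Rightarrow> ereal)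
     \<Rightarrow> ('e \<Rightarrow> 'e \<Rightarrow> 'e) \<Rightarrow> real \<Rightarrow> real \<Rightarrow> 'e \<Rightarrow> 'e \<Rightarrow> 'e" where
  "ccurve g M \<Delta> R r t x y =
     (let q = qpt g M \<Delta> R r x y in
      R q ((1 - t) *\<^sub>R Rinv g M \<Delta> R q x + t *\<^sub>R Rinv g M \<Delta> R q y))"

definition ccurve_defined :: "('e \<Rightarrow> 'e \<Rightarrow> 'e \<Rightarrow> real) \<Rightarrow> 'e::euclidean_space set \<Rightarrow> ('e \<times> 'e) set
     \<Rightarrow> ('e \<Rightarrow> ereal) \<Rightarrow> ('e \<Rightarrow> 'e \<Rightarrow> 'e) \<Rightarrow> real \<Rightarrow> real \<Rightarrow> 'e \<Rightarrow> 'e \<Rightarrow> bool" where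
  "ccurve_defined g M Odom \<Delta> R r t x y \<longleftrightarrow>
     Rinv_defined g M \<Delta> R x y \<and>
     R_defined Odom x (r *\<^sub>R Rinv g M \<Delta> R x y) \<and>
     (let q = qpt g M \<Delta> R r x y in
        Rinv_defined g M \<Delta> R q x \<and> Rinv_defined g M \<Delta> R q y \<and>
        R_defined Odom q ((1 - t) *\<^sub>R Rinv g M \<Delta> R q x + t *\<^sub>R Rinv g M \<Delta> R q y))"

text \<open>beta(t; b0,b1,b2,b3) = beta_012(t,t,t) is well-defined.\<close>
definition casteljau_defined :: "('e \<Rightarrow> 'e \<Rightarrow> 'e \<Rightarrow> real) \<Rightarrow> 'e::euclidean_space set \<Rightarrow> ('e \<times> 'e) set
     \<Rightarrow> ('e \<Rightarrow> ereal) \<Rightarrow> ('e \<Rightarrow> 'e \<Rightarrow> 'e) \<Rightarrow> real \<Rightarrow> 'e \<Rightarrow> 'e \<Rightarrow> 'e \<Rightarrow> 'e \<Rightarrow> bool" where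
  "casteljau_defined g M Odom \<Delta> R t b0 b1 b2 b3 \<longleftrightarrow>
     (let c = ccurve g M \<Delta> R;
          cd = ccurve_defined g M Odom \<Delta> R;
          \<beta>0 = c 0 t b0 b1; \<beta>1 = c (1/2) t b1 b2; \<beta>2 = c 1 t b2 b3;
          \<beta>01 = c 0 t \<beta>0 \<beta>1; \<beta>12 = c 1 t \<beta>1 \<beta>2
      in cd 0 t b0 b1 \<and> cd (1/2) t b1 b2 \<and> cd 1 t b2 b3 \<and>
         cd 0 t \<beta>0 \<beta>1 \<and> cd 1 t \<beta>1 \<beta>2 \<and> cd t t \<beta>01 \<beta>12)"

end

theory Submission
  imports Defs
begin

text \<open>Since \<open>R\<^sub>x\<^sup>-\<^sup>1(x) = 0\<close>, retraction-convexity of \<open>U\<close> applied to the triple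
  \<open>(x, x, y)\<close> puts \<open>q(r) = R\<^sub>x(r R\<^sub>x\<^sup>-\<^sup>1(y))\<close> in \<open>U\<close> for \<open>r \<in> [0,1]\<close>; applied once more
  at \<open>q(r)\<close>, it shows that \<open>c\<^sub>r(t;x,y)\<close> is well-defined and again lies in \<open>U\<close>.
  Each curve in the de Casteljau construction is such a \<open>c\<^sub>r\<close> evaluated at points
  produced earlier in the construction, hence all of them are well-defined.\<close>

lemma smooth_on_const: "smooth_on S (\<lambda>_. c)"
proof -
  have deriv_const: "frechet_derivative (\<lambda>_. c') (at x) = (\<lambda>v. 0)" for x and c' :: 'b
    by (rule frechet_derivative_at[symmetric]) (simp add: has_derivative_const)
  have "\<exists>c'. (\<lambda>_::'a. c) = (\<lambda>_. c')" by blast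
  then show ?thesis
  proof (rule smooth_on.coinduct[where X="\<lambda>f. \<exists>c'. f = (\<lambda>_. c')"])
    fix f :: "'a \<Rightarrow> 'b"
    assume "\<exists>c'. f = (\<lambda>_. c')"
    then obtain c' where "f = (\<lambda>_. c')" by blast
    then show "\<exists>f'. f = f' \<and> f' differentiable_on S \<and>
        (\<forall>v. (\<exists>c'. (\<lambda>x. frechet_derivative f' (at x) v) = (\<lambda>_. c')) \<or>
             smooth_on S (\<lambda>x. frechet_derivative f' (at x) v))"
      by (auto simp: deriv_const differentiable_on_def)
  qed
qed

lemma zero_in_tangent_space: "x \<in> M \<Longrightarrow> 0 \<in> tangent_space M x"
  unfolding tangent_space_def
  by (auto intro!: exI[where x="\<lambda>_. x"] smooth_on_const has_vector_derivative_const)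

lemma zero_in_Tset:
  assumes "retraction_setting M g Odom R \<Delta>" and "x \<in> M"
  shows "(x, 0) \<in> Tset g M \<Delta>"
proof -
  have "bilinear (g x)" and "\<Delta> x > 0"
    using assms unfolding retraction_setting_def riemannian_metric_def by auto
  then show ?thesis
    using assms(2) zero_in_tangent_space[OF assms(2)]
    by (auto simp: Tset_def tangent_bundle_def rnorm_def zero_ereal_def bilinear_lzero)
qed

lemma Rinv_self:
  assumes setting: "retraction_setting M g Odom R \<Delta>" and "x \<in> M"
  shows "Rinv g M \<Delta> R x x = 0"
proof -
  have zero_T: "(x, 0) \<in> Tset g M \<Delta>" using zero_in_Tset[OF assms] .
  have "R x 0 = x" and inj: "inj_on (Emap R) (Tset g M \<Delta>)"
    using setting \<open>x \<in> M\<close> unfolding retraction_setting_def is_retraction_def by auto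
  then have "Emap R (x, 0) = (x, x)" by (simp add: Emap_def)
  then show ?thesis
    unfolding Rinv_def
    using zero_T inj_onD[OF inj _ _ zero_T] by (intro the_equality) (auto simp: Emap_def)
qed

lemma retraction_convexD:
  assumes "retraction_convex M g Odom R \<Delta> U"
    and "x \<in> U" and "y \<in> U" and "z \<in> U" and "\<tau> \<in> {0..1}"
  shows "Rinv_defined g M \<Delta> R x y"
    and "R_defined Odom x ((1 - \<tau>) *\<^sub>R Rinv g M \<Delta> R x y + \<tau> *\<^sub>R Rinv g M \<Delta> R x z)"
    and "R x ((1 - \<tau>) *\<^sub>R Rinv g M \<Delta> R x y + \<tau> *\<^sub>R Rinv g M \<Delta> R x z) \<in> U"
  using assms unfolding retraction_convex_def by blast+

context
  fixes M :: "'e::euclidean_space set"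
    and g :: "'e \<Rightarrow> 'e \<Rightarrow> 'e \<Rightarrow> real"
    and Odom :: "('e \<times> 'e) set"
    and R :: "'e \<Rightarrow> 'e \<Rightarrow> 'e"
    and \<Delta> :: "'e \<Rightarrow> ereal"
    and U :: "'e set"
  assumes setting: "retraction_setting M g Odom R \<Delta>"
    and U_subset: "U \<subseteq> M"
    and convex: "retraction_convex M g Odom R \<Delta> U"
begin

lemma qpt_in_retraction_convex:
  assumes "x \<in> U" and "y \<in> U" and "r \<in> {0..1}"
  shows "R_defined Odom x (r *\<^sub>R Rinv g M \<Delta> R x y)"
    and "qpt g M \<Delta> R r x y \<in> U"
proof -
  have "Rinv g M \<Delta> R x x = 0"
    using Rinv_self[OF setting] assms(1) U_subset by blast
  then show "R_defined Odom x (r *\<^sub>R Rinv g M \<Delta> R x y)" and "qpt g M \<Delta> R r x y \<in> U"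
    using retraction_convexD[OF convex assms(1,1,2,3)] by (simp_all add: qpt_def)
qed

lemma ccurve_in_retraction_convex:
  assumes "x \<in> U" and "y \<in> U" and "r \<in> {0..1}" and "t \<in> {0..1}"
  shows "ccurve_defined g M Odom \<Delta> R r t x y"
    and "ccurve g M \<Delta> R r t x y \<in> U"
proof -
  define q where "q = qpt g M \<Delta> R r x y"
  have "q \<in> U" using qpt_in_retraction_convex(2)[OF assms(1-3)] by (simp add: q_def)
  note at_q = retraction_convexD[OF convex \<open>q \<in> U\<close> assms(1,2,4)]
  show "ccurve_defined g M Odom \<Delta> R r t x y"
    unfolding ccurve_defined_def Let_def q_def[symmetric]
    using retraction_convexD(1)[OF convex assms(1,2,2,4)] qpt_in_retraction_convex(1)[OF assms(1-3)]
      retraction_convexD(1)[OF convex \<open>q \<in> U\<close> assms(2,2,4)] at_q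
    by blast
  show "ccurve g M \<Delta> R r t x y \<in> U"
    unfolding ccurve_def Let_def q_def[symmetric] using at_q(3) .
qed

end

theorem proposition3p4:
  fixes M :: "'e::euclidean_space set"
    and g :: "'e \<Rightarrow> 'e \<Rightarrow> 'e \<Rightarrow> real"
    and Odom :: "('e \<times> 'e) set"
    and R :: "'e \<Rightarrow> 'e \<Rightarrow> 'e"
    and \<Delta> :: "'e \<Rightarrow> ereal"
    and U :: "'e set"
  assumes "retraction_setting M g Odom R \<Delta>"
    and "U \<subseteq> M"
    and "retraction_convex M g Odom R \<Delta> U"
    and "b0 \<in> U" and "b1 \<in> U" and "b2 \<in> U" and "b3 \<in> U"
  shows "\<forall>t\<in>{0..1}. casteljau_defined g M Odom \<Delta> R t b0 b1 b2 b3"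
proof
  fix t :: real
  assume t: "t \<in> {0..1}"
  note c_defined = ccurve_in_retraction_convex(1)[OF assms(1-3) _ _ _ t]
  note c_in_U = ccurve_in_retraction_convex(2)[OF assms(1-3) _ _ _ t]
  have r: "(0::real) \<in> {0..1}" "(1/2::real) \<in> {0..1}" "(1::real) \<in> {0..1}" by auto
  have \<beta>\<^sub>0: "ccurve g M \<Delta> R 0 t b0 b1 \<in> U"
    and \<beta>\<^sub>1: "ccurve g M \<Delta> R (1/2) t b1 b2 \<in> U"
    and \<beta>\<^sub>2: "ccurve g M \<Delta> R 1 t b2 b3 \<in> U"
    using c_in_U assms(4-7) r by blast+
  have \<beta>\<^sub>0\<^sub>1: "ccurve g M \<Delta> R 0 t (ccurve g M \<Delta> R 0 t b0 b1) (ccurve g M \<Delta> R (1/2) t b1 b2) \<in> U"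
    and \<beta>\<^sub>1\<^sub>2: "ccurve g M \<Delta> R 1 t (ccurve g M \<Delta> R (1/2) t b1 b2) (ccurve g M \<Delta> R 1 t b2 b3) \<in> U"
    using c_in_U[OF \<beta>\<^sub>0 \<beta>\<^sub>1 r(1)] c_in_U[OF \<beta>\<^sub>1 \<beta>\<^sub>2 r(3)] .
  show "casteljau_defined g M Odom \<Delta> R t b0 b1 b2 b3"
    unfolding casteljau_defined_def Let_def
    using c_defined assms(4-7) r t \<beta>\<^sub>0 \<beta>\<^sub>1 \<beta>\<^sub>2 \<beta>\<^sub>0\<^sub>1 \<beta>\<^sub>1\<^sub>2 by blast
qed

end
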